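(* Let $\hat h^\bullet$ be a relative differential extension of a cohomology theory $h^\bullet$ and $\rho\colon A\to X$ a smooth map. Then the sequence $$\cdots\to h^n(\rho)\xrightarrow{\mathrm{ch}}H^n_{dR}(\rho;\mathfrak h^\bullet_{\mathbb R})\xrightarrow{a}\hat h^{n+1}_{\mathrm{fl}}(\rho)\xrightarrow{I}h^{n+1}(\rho)\xrightarrow{\mathrm{ch}}H^{n+1}_{dR}(\rho;\mathfrak h^\bullet_{\mathbb R})\to\cdots$$ is exact, where $a$ is restricted to $H^n_{dR}(\rho;\mathfrak h^\bullet_{\mathbb R})\subset\Omega^n_{\mathrm{cl}}(\rho;\mathfrak h^\bullet_{\mathbb R})/\mathrm{Im}(d)$ and $\hat h^\bullet_{\mathrm{fl}}(\rho)=\ker R$.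
   Context: Let $h^\bullet$ be a cohomology theory defined on continuous maps: for a map $\rho\colon A\to X$, $h^\bullet(\rho)$ is its relative cohomology (the reduced cohomology of the mapping cone). Put $\mathfrak h^\bullet=h^\bullet(pt)$, $\mathfrak h^\bullet_{\mathbb R}=\mathfrak h^\bullet\otimes_{\mathbb Z}\mathbb R$. Let $\mathcal M_2$ be the category whose objects are smooth maps $\rho\colon A\to X$ between smooth manifolds (possibly with boundary), a morphism from $\eta\colon B\to Y$ to $\rho$ being a pair $(f,g)$ of smooth maps $f\colon Y\to X$, $g\colon B\to A$ with $f\circ\eta=\rho\circ g$. For $\rho\colon A\to X$ set $\Omega^\bullet(\rho;\mathfrak h^\bullet_{\mathbb R})=\Omega^\bullet(X;\mathfrak h^\bullet_{\mathbb R})\oplus\Omega^{\bullet-1}(A;\mathfrak h^\bullet_{\mathbb R})$ (total degree) with differential $d(\omega,\eta)=(d\omega,\rho^*\omega-d\eta)$; its cohomology is $H^\bullet_{dR}(\rho;\mathfrak h^\bullet_{\mathbb R})$, and $\mathrm{ch}\colon h^\bullet(\rho)\to H^\bullet_{dR}(\rho;\mathfrak h^\bullet_{\mathbb R})$ is the relative Chern character. A relative differential extension of $h^\bullet$ is a contravariant functor $\hat h^\bullet$ from $\mathcal M_2$ to graded abelian groups with natural transformations $I\colon\hat h^\bullet(\rho)\to h^\bullet(\rho)$, $R\colon\hat h^\bullet(\rho)\to\Omega^\bullet_{\mathrm{cl}}(\rho;\mathfrak h^\bullet_{\mathbb R})$, $a\colon\Omega^{\bullet-1}(\rho;\mathfrak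 h^\bullet_{\mathbb R})/\mathrm{Im}(d)\to\hat h^\bullet(\rho)$ such that: (A1) $R\circ a=d$; (A2) the de Rham class of $R(\hat\alpha)$ is $\mathrm{ch}(I(\hat\alpha))$; (A3) $h^{\bullet-1}(\rho)\xrightarrow{\mathrm{ch}}\Omega^{\bullet-1}(\rho;\mathfrak h^\bullet_{\mathbb R})/\mathrm{Im}(d)\xrightarrow{a}\hat h^\bullet(\rho)\xrightarrow{I}h^\bullet(\rho)\to0$ is exact; (A4) writing $R=(R',\mathrm{cov})$ and $\pi$ for the natural morphism from $\emptyset\to X$ to $\rho$ (with $\hat h^\bullet(X):=\hat h^\bullet(\emptyset\to X)$), $\rho^*\circ\pi^*=a\circ\mathrm{cov}$. Flat classes are those with $R=0$. *)

theory Defs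
  imports Main
begin

text \<open>Abstract algebraic data of a relative differential extension evaluated at one
fixed smooth map rho. Graded groups are modelled by degree-indexed carrier subsets
(subgroups) of ambient abelian groups:
  hh n  = carrier of hat-h^n(rho),
  h n   = carrier of h^n(rho),
  Om n  = carrier of Omega^n(rho; h_R) (total degree), with differential d.
De Rham classes are represented by closed forms modulo exact forms; ch y is a
closed representative of the relative Chern character of y (defined up to exact
forms). The map a is given on forms and required to vanish on exact forms, i.e.
it factors through Omega^(n-1)/Im d.\<close>

definition subgrp :: "'a::ab_group_add set \<Rightarrow> bool" where
  "subgrp S \<longleftrightarrow> 0 \<in> S \<and> (\<forall>x\<in>S. \<forall>y\<in>S. x + y \<in> S) \<and> (\<forall>x\<in>S. - x \<in> S)"

definition additive_on :: "'a::ab_group_add set \<Rightarrow> ('a \<Rightarrow> 'b::ab_group_add) \<Rightarrow> bool" where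
  "additive_on S f \<longleftrightarrow> (\<forall>x\<in>S. \<forall>y\<in>S. f (x + y) = f x + f y)"

definition closed_forms :: "(int \<Rightarrow> 'w::ab_group_add set) \<Rightarrow> ('w \<Rightarrow> 'w) \<Rightarrow> int \<Rightarrow> 'w set" where
  "closed_forms Om d n = {w \<in> Om n. d w = 0}"

definition exact_forms :: "(int \<Rightarrow> 'w::ab_group_add set) \<Rightarrow> ('w \<Rightarrow> 'w) \<Rightarrow> int \<Rightarrow> 'w set" where
  "exact_forms Om d n = d ` Om (n - 1)"

definition rel_diff_ext_at ::
  "(int \<Rightarrow> 'a::ab_group_add set) \<Rightarrow> (int \<Rightarrow> 'b::ab_group_add set) \<Rightarrow> (int \<Rightarrow> 'w::ab_group_add set)
   \<Rightarrow> ('w \<Rightarrow> 'w) \<Rightarrow> ('a \<Rightarrow> 'b) \<Rightarrow> ('a \<Rightarrow> 'w) \<Rightarrow> ('w \<Rightarrow> 'a) \<Rightarrow> ('b \<Rightarrow> 'w) \<Rightarrow> bool" where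
  "rel_diff_ext_at hh h Om d I R a ch \<longleftrightarrow>
     (\<forall>n. subgrp (hh n) \<and> subgrp (h n) \<and> subgrp (Om n)) \<and>
     (\<forall>n. additive_on (Om n) d \<and> d ` Om n \<subseteq> Om (n + 1)) \<and>
     (\<forall>n. \<forall>w\<in>Om n. d (d w) = 0) \<and>
     (\<forall>n. additive_on (hh n) I \<and> I ` hh n \<subseteq> h n) \<and>
     (\<forall>n. additive_on (hh n) R \<and> R ` hh n \<subseteq> closed_forms Om d n) \<and>
     (\<forall>n. additive_on (Om (n - 1)) a \<and> a ` Om (n - 1) \<subseteq> hh n) \<and>
     (\<forall>n. \<forall>w\<in>exact_forms Om d (n - 1). a w = 0) \<and>
     (\<forall>n. ch ` h n \<subseteq> closed_forms Om d n) \<and>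
     (\<forall>n. \<forall>x\<in>h n. \<forall>y\<in>h n. ch (x + y) - (ch x + ch y) \<in> exact_forms Om d n) \<and>
     \<comment> \<open>(A1) R o a = d\<close>
     (\<forall>n. \<forall>w\<in>Om (n - 1). R (a w) = d w) \<and>
     \<comment> \<open>(A2) [R x] = ch (I x)\<close>
     (\<forall>n. \<forall>x\<in>hh n. R x - ch (I x) \<in> exact_forms Om d n) \<and>
     \<comment> \<open>(A3) exactness of h^(n-1) -> Omega^(n-1)/Im d -> hat h^n -> h^n -> 0\<close>
     (\<forall>n. \<forall>w\<in>Om (n - 1). a w = 0 \<longleftrightarrow>
            (\<exists>y\<in>h (n - 1). w - ch y \<in> exact_forms Om d (n - 1))) \<and>
     (\<forall>n. \<forall>x\<in>hh n. I x = 0 \<longleftrightarrow> (\<exists>w\<in>Om (n - 1). a w = x)) \<and>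
     (\<forall>n. I ` hh n = h n)"

end

theory Submission
  imports Defs
begin

text \<open>Flatness of a w for closed w and the first two exactness statements are
(A1) and (A3) restricted to closed forms. At h^(n+1): if ch y = d u is exact, lift y to some
x by surjectivity of I; by (A2) R x = d (u + v) = R (a (u + v)), so x - a (u + v) is a flat
lift of y because I kills the image of a. Conversely a flat lift x of y gives
ch y = ch (I x) - R x exact by (A2).\<close>

lemma subgrp_diff: "subgrp S \<Longrightarrow> x \<in> S \<Longrightarrow> y \<in> S \<Longrightarrow> x - y \<in> S"
  unfolding subgrp_def by (metis diff_conv_add_uminus)

lemma subgrp_add: "subgrp S \<Longrightarrow> x \<in> S \<Longrightarrow> y \<in> S \<Longrightarrow> x + y \<in> S"
  unfolding subgrp_def by blast

lemma subgrp_uminus: "subgrp S \<Longrightarrow> x \<in> S \<Longrightarrow> - x \<in> S"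
  unfolding subgrp_def by blast

lemma additive_on_diff:
  assumes S: "subgrp S" and f: "additive_on S f" and "x \<in> S" "y \<in> S"
  shows "f (x - y) = f x - f y"
proof -
  have "f (x - y) + f y = f (x - y + y)"
    using f assms(3,4) subgrp_diff[OF S] unfolding additive_on_def by metis
  then show ?thesis by (simp add: eq_diff_eq)
qed

lemma additive_on_uminus:
  assumes "subgrp S" "additive_on S f" "x \<in> S"
  shows "f (- x) = - f x"
proof -
  have "0 \<in> S" using assms(1) unfolding subgrp_def by blast
  then show ?thesis
    using additive_on_diff[OF assms(1,2) _ assms(3)] additive_on_diff[OF assms(1,2), of 0 0]
    by (metis diff_0 diff_self)
qed

locale rel_diff_ext =
  fixes hh :: "int \<Rightarrow> 'a::ab_group_add set" and h :: "int \<Rightarrow> 'b::ab_group_add set"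
    and Om :: "int \<Rightarrow> 'w::ab_group_add set" and d :: "'w \<Rightarrow> 'w"
    and I :: "'a \<Rightarrow> 'b" and R :: "'a \<Rightarrow> 'w" and a :: "'w \<Rightarrow> 'a" and ch :: "'b \<Rightarrow> 'w"
  assumes rel_diff_ext: "rel_diff_ext_at hh h Om d I R a ch"
begin

lemma subgrp_hh: "subgrp (hh n)"
  using rel_diff_ext unfolding rel_diff_ext_at_def by simp

lemma subgrp_Om: "subgrp (Om n)"
  using rel_diff_ext unfolding rel_diff_ext_at_def by simp

lemma additive_d: "additive_on (Om n) d"
  using rel_diff_ext unfolding rel_diff_ext_at_def by simp

lemma additive_I: "additive_on (hh n) I"
  using rel_diff_ext unfolding rel_diff_ext_at_def by simp

lemma additive_R: "additive_on (hh n) R"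
  using rel_diff_ext unfolding rel_diff_ext_at_def by simp

lemma surj_I: "I ` hh n = h n"
  using rel_diff_ext unfolding rel_diff_ext_at_def by simp

lemma R_minus_ch_I_exact: "x \<in> hh n \<Longrightarrow> R x - ch (I x) \<in> exact_forms Om d n"
  using rel_diff_ext unfolding rel_diff_ext_at_def by simp

text \<open>The axioms on a are indexed by the degree of its target; here they are reindexed
by the degree n of the source forms, which needs the instance m = n + 1.\<close>

lemma a_mem_hh: "w \<in> Om n \<Longrightarrow> a w \<in> hh (n + 1)"
proof -
  have "a ` Om (m - 1) \<subseteq> hh m" for m
    using rel_diff_ext unfolding rel_diff_ext_at_def by simp
  from this[of "n + 1"] show "w \<in> Om n \<Longrightarrow> a w \<in> hh (n + 1)" by auto
qed

lemma R_a_eq_d: "w \<in> Om n \<Longrightarrow> R (a w) = d w"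
proof -
  have "w \<in> Om (m - 1) \<Longrightarrow> R (a w) = d w" for m
    using rel_diff_ext unfolding rel_diff_ext_at_def by simp
  from this[of "n + 1"] show "w \<in> Om n \<Longrightarrow> R (a w) = d w" by simp
qed

lemma a_eq_0_iff:
  "w \<in> Om n \<Longrightarrow> a w = 0 \<longleftrightarrow> (\<exists>y\<in>h n. w - ch y \<in> exact_forms Om d n)"
proof -
  have "w \<in> Om (m - 1) \<Longrightarrow>
      a w = 0 \<longleftrightarrow> (\<exists>y\<in>h (m - 1). w - ch y \<in> exact_forms Om d (m - 1))" for m
    using rel_diff_ext unfolding rel_diff_ext_at_def by simp
  from this[of "n + 1"]
  show "w \<in> Om n \<Longrightarrow> a w = 0 \<longleftrightarrow> (\<exists>y\<in>h n. w - ch y \<in> exact_forms Om d n)" by simp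
qed

lemma I_eq_0_iff: "x \<in> hh (n + 1) \<Longrightarrow> I x = 0 \<longleftrightarrow> (\<exists>w\<in>Om n. a w = x)"
proof -
  have "x \<in> hh m \<Longrightarrow> I x = 0 \<longleftrightarrow> (\<exists>w\<in>Om (m - 1). a w = x)" for m
    using rel_diff_ext unfolding rel_diff_ext_at_def by simp
  from this[of "n + 1"]
  show "x \<in> hh (n + 1) \<Longrightarrow> I x = 0 \<longleftrightarrow> (\<exists>w\<in>Om n. a w = x)" by simp
qed

lemma a_closed_form_flat: "w \<in> closed_forms Om d n \<Longrightarrow> a w \<in> hh (n + 1) \<and> R (a w) = 0"
  unfolding closed_forms_def using a_mem_hh R_a_eq_d by auto

lemma exact_at_de_Rham:
  "w \<in> closed_forms Om d n \<Longrightarrow> a w = 0 \<longleftrightarrow> (\<exists>y\<in>h n. w - ch y \<in> exact_forms Om d n)"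
  unfolding closed_forms_def using a_eq_0_iff by blast

lemma exact_at_flat:
  assumes "x \<in> hh (n + 1)" "R x = 0"
  shows "I x = 0 \<longleftrightarrow> (\<exists>w\<in>closed_forms Om d n. a w = x)"
  using assms I_eq_0_iff R_a_eq_d unfolding closed_forms_def by fastforce

lemma flat_lift_of_exact_ch:
  assumes y: "y \<in> h (n + 1)" and u: "u \<in> Om n" "ch y = d u"
  shows "\<exists>x\<in>hh (n + 1). R x = 0 \<and> I x = y"
proof -
  obtain x where x: "x \<in> hh (n + 1)" "I x = y"
    using y unfolding surj_I[symmetric] by blast
  obtain v where v: "v \<in> Om n" "R x - ch y = d v"
    using R_minus_ch_I_exact[OF x(1)] x(2) unfolding exact_forms_def by auto
  have uv: "u + v \<in> Om n"
    using subgrp_add[OF subgrp_Om u(1) v(1)] .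
  have "R x = d u + d v"
    using u(2) v(2) by (simp add: algebra_simps)
  also have "\<dots> = R (a (u + v))"
    using additive_d u(1) v(1) R_a_eq_d[OF uv] unfolding additive_on_def by simp
  finally have R_eq: "R x = R (a (u + v))" .
  have a_uv: "a (u + v) \<in> hh (n + 1)"
    using a_mem_hh[OF uv] .
  have I_a: "I (a (u + v)) = 0"
    using I_eq_0_iff[OF a_uv] uv by blast
  show ?thesis
  proof (intro bexI conjI)
    show "x - a (u + v) \<in> hh (n + 1)"
      using subgrp_diff[OF subgrp_hh x(1) a_uv] .
    show "R (x - a (u + v)) = 0"
      using additive_on_diff[OF subgrp_hh additive_R x(1) a_uv] R_eq by simp
    show "I (x - a (u + v)) = y"
      using additive_on_diff[OF subgrp_hh additive_I x(1) a_uv] I_a x(2) by simp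
  qed
qed

lemma exact_ch_of_flat_lift:
  assumes x: "x \<in> hh n" "R x = 0"
  shows "ch (I x) \<in> exact_forms Om d n"
proof -
  obtain v where v: "v \<in> Om (n - 1)" "- ch (I x) = d v"
    using R_minus_ch_I_exact[OF x(1)] x(2) unfolding exact_forms_def by auto
  then have "ch (I x) = d (- v)"
    using additive_on_uminus[OF subgrp_Om additive_d] by (metis minus_minus)
  then show ?thesis
    unfolding exact_forms_def using subgrp_uminus[OF subgrp_Om v(1)] by blast
qed

lemma exact_at_h:
  assumes y: "y \<in> h (n + 1)"
  shows "ch y \<in> exact_forms Om d (n + 1) \<longleftrightarrow> (\<exists>x\<in>hh (n + 1). R x = 0 \<and> I x = y)"
proof
  assume "ch y \<in> exact_forms Om d (n + 1)"
  then obtain u where "u \<in> Om n" "ch y = d u"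
    unfolding exact_forms_def by auto
  then show "\<exists>x\<in>hh (n + 1). R x = 0 \<and> I x = y"
    using flat_lift_of_exact_ch[OF y] by blast
next
  assume "\<exists>x\<in>hh (n + 1). R x = 0 \<and> I x = y"
  then show "ch y \<in> exact_forms Om d (n + 1)"
    using exact_ch_of_flat_lift by blast
qed

end

theorem lemma2p5:
  fixes hh :: "int \<Rightarrow> 'a::ab_group_add set" and h :: "int \<Rightarrow> 'b::ab_group_add set"
    and Om :: "int \<Rightarrow> 'w::ab_group_add set" and d :: "'w \<Rightarrow> 'w"
    and I :: "'a \<Rightarrow> 'b" and R :: "'a \<Rightarrow> 'w" and a :: "'w \<Rightarrow> 'a" and ch :: "'b \<Rightarrow> 'w"
  assumes "rel_diff_ext_at hh h Om d I R a ch"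
  shows
    \<comment> \<open>a maps H^n_dR into flat classes\<close>
    "(\<forall>n. \<forall>w\<in>closed_forms Om d n. a w \<in> hh (n + 1) \<and> R (a w) = 0) \<and>
     \<comment> \<open>exactness at H^n_dR\<close>
     (\<forall>n. \<forall>w\<in>closed_forms Om d n.
        a w = 0 \<longleftrightarrow> (\<exists>y\<in>h n. w - ch y \<in> exact_forms Om d n)) \<and>
     \<comment> \<open>exactness at hat h^(n+1)_fl\<close>
     (\<forall>n. \<forall>x\<in>hh (n + 1). R x = 0 \<longrightarrow>
        (I x = 0 \<longleftrightarrow> (\<exists>w\<in>closed_forms Om d n. a w = x))) \<and>
     \<comment> \<open>exactness at h^(n+1)\<close>
     (\<forall>n. \<forall>y\<in>h (n + 1).
        ch y \<in> exact_forms Om d (n + 1) \<longleftrightarrow> (\<exists>x\<in>hh (n + 1). R x = 0 \<and> I x = y))"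
proof -
  interpret rel_diff_ext hh h Om d I R a ch
    using assms by unfold_locales
  show ?thesis
    using a_closed_form_flat exact_at_de_Rham exact_at_flat exact_at_h by blast
qed

end
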